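(* Consider the faulty-starter delivery problem described in the context, with finisher starting position $(x,y)$, $y\ge0$. The competitive ratio of algorithm $\mathcal{A}_0$ is $$\mathrm{CR}_{\mathcal{A}_0}=\frac{1+\sqrt{x^2+y^2}}{\max\left\{1,\sqrt{(x-1)^2+y^2}\right\}}.$$
   Context: Setting. In the plane let $S=(0,0)$ and $T=(1,0)$. A "starter" drone carrying a package starts at $S$ at time $0$ and moves at unit speed along $\overline{ST}$ towards $T$. At an unknown time $t\in[0,1]$ it fails and stays forever at $(t,0)$ with the package. A "finisher" drone starts at time $0$ at $P=(x,y)$ with $y\ge0$, moves at unit speed and can stop and turn instantaneously. The package can be handed over only when the drones are co-located; it is delivered at the first time the finisher, carrying the package, is at $T$. An online algorithm $\mathcal{A}$ specifies the finisher's trajectory using only $(x,y)$; $A(t)$ is its delivery time for fail time $t$. $\mathrm{Opt}(t)=\max\{1,\sqrt{(x-t)^2+y^2}+1-t\}$ is the optimal offline delivery time. $\mathrm{CR}_{\mathcal{A}}(t)=A(t)/\mathrm{Opt}(t)$ and $\mathrm{CR}_{\mathcal{A}}=\sup_{0\le t\le1}\mathrm{CR}_{\mathcal{A}}(t)$. Algorithm $\mathcal{A}_0$: the finisher goes straight to $S$, then moves along $\overline{ST}$ towards $T$ until it finds the package, then continues to $T$. *)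

theory Defs
  imports Complex_Main
begin

text \<open>Optimal offline delivery time for fail time t, finisher start (x,y).\<close>
definition Opt :: "real \<Rightarrow> real \<Rightarrow> real \<Rightarrow> real" where
  "Opt x y t = max 1 (sqrt ((x - t)^2 + y^2) + 1 - t)"

text \<open>Delivery time of algorithm A0 for fail time t: the finisher walks straight
  to S (distance sqrt(x^2+y^2)); then it walks along ST from S to the failure
  point (t,0) (distance t; it can never overtake the starter, which moves at the
  same speed in the same direction, so it first meets the package at (t,0));
  then it carries the package from (t,0) to T (distance 1 - t).\<close>
definition A0 :: "real \<Rightarrow> real \<Rightarrow> real \<Rightarrow> real" where
  "A0 x y t = sqrt (x^2 + y^2) + t + (1 - t)"

definition CR_A0_at :: "real \<Rightarrow> real \<Rightarrow> real \<Rightarrow> real" where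
  "CR_A0_at x y t = A0 x y t / Opt x y t"

definition CR_A0 :: "real \<Rightarrow> real \<Rightarrow> real" where
  "CR_A0 x y = (SUP t\<in>{0..1}. CR_A0_at x y t)"

end

theory Submission
  imports Defs
begin

text \<open>The delivery time of \<open>A\<^sub>0\<close> does not depend on the fail time, while by the
  triangle inequality the optimal offline time is smallest when the starter never
  fails (\<open>t = 1\<close>). Hence the worst case is \<open>t = 1\<close>.\<close>

lemma A0_eq: "A0 x y t = 1 + sqrt (x^2 + y^2)"
  by (simp add: A0_def)

lemma Opt_pos: "Opt x y t > 0"
  by (simp add: Opt_def)

lemma Opt_at_1: "Opt x y 1 = max 1 (sqrt ((x - 1)^2 + y^2))"
  by (simp add: Opt_def)

lemma dist_to_T_le:
  fixes x y t :: real
  assumes "t \<le> 1"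
  shows "sqrt ((x - 1)^2 + y^2) \<le> sqrt ((x - t)^2 + y^2) + (1 - t)"
proof -
  have "sqrt ((x - 1)^2 + y^2) = sqrt (((x - t) + (t - 1))^2 + (y + 0)^2)"
    by simp
  also have "\<dots> \<le> sqrt ((x - t)^2 + y^2) + sqrt ((t - 1)^2 + 0^2)"
    by (rule real_sqrt_sum_squares_triangle_ineq)
  also have "sqrt ((t - 1)^2 + 0^2) = 1 - t"
    using assms by simp
  finally show ?thesis .
qed

lemma Opt_ge_Opt_at_1: "t \<le> 1 \<Longrightarrow> Opt x y 1 \<le> Opt x y t"
  using dist_to_T_le[of t x y] by (auto simp: Opt_def)

lemma CR_A0_at_le_at_1:
  assumes "t \<le> 1"
  shows "CR_A0_at x y t \<le> CR_A0_at x y 1"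
  unfolding CR_A0_at_def A0_eq
  by (rule divide_left_mono) (use Opt_ge_Opt_at_1[OF assms] Opt_pos in
      \<open>auto intro: add_nonneg_nonneg mult_pos_pos\<close>)

theorem theorem1:
  fixes x y :: real
  assumes "y \<ge> 0"
  shows "CR_A0 x y = (1 + sqrt (x^2 + y^2)) / max 1 (sqrt ((x - 1)^2 + y^2))"
proof -
  have "CR_A0 x y = CR_A0_at x y 1"
    unfolding CR_A0_def by (rule cSup_eq_maximum) (auto intro: CR_A0_at_le_at_1)
  also have "\<dots> = (1 + sqrt (x^2 + y^2)) / max 1 (sqrt ((x - 1)^2 + y^2))"
    by (simp only: CR_A0_at_def A0_eq Opt_at_1)
  finally show ?thesis .
qed

end
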